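(* Let $h\in\mathcal H$ and $d=\operatorname{hdepth}(h)$. Then for all integers $k,d'$ with $0\le k\le d'\le d$ we have $\beta_k^{d'}(h)\ge \beta_k^d(h)\ge 0$.
   Context: $\mathcal H$ denotes the set of nonzero functions $h:\mathbb Z\to\mathbb Z_{\ge 0}$ such that $h(j)=0$ for all sufficiently negative $j$. For $h\in\mathcal H$ and integers $k\le d$, set $\beta_k^d(h)=\sum_{j\le k}(-1)^{k-j}\binom{d-j}{k-j}h(j)$. The (arithmetic) Hilbert depth of $h$ is $\operatorname{hdepth}(h)=\max\{d\in\mathbb Z:\ \beta_k^d(h)\ge 0\text{ for all integers }k\le d\}$. *)

theory Defs
  imports Main
begin

definition in_H :: "(int \<Rightarrow> nat) \<Rightarrow> bool" where
  "in_H h \<longleftrightarrow> h \<noteq> (\<lambda>_. 0) \<and> (\<exists>m. \<forall>j<m. h j = 0)"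

text \<open>beta_k^d(h) = sum_{j<=k} (-1)^(k-j) binom(d-j, k-j) h(j), for k <= d.
  Only finitely many terms are nonzero when h is in H; the sum ranges over them.\<close>
definition beta :: "int \<Rightarrow> int \<Rightarrow> (int \<Rightarrow> nat) \<Rightarrow> int" where
  "beta k d h = (\<Sum>j\<in>{j. j \<le> k \<and> h j \<noteq> 0}.
      (-1) ^ nat (k - j) * int (nat (d - j) choose nat (k - j)) * int (h j))"

definition hdepth :: "(int \<Rightarrow> nat) \<Rightarrow> int" where
  "hdepth h = (GREATEST d. \<forall>k\<le>d. beta k d h \<ge> 0)"

end

theory Submission
  imports Defs
begin

text \<open>
  Pascal's rule gives \<open>beta k d = beta k (d + 1) + beta (k - 1) d\<close>. If all \<open>beta i d\<close> with
  \<open>i \<le> d\<close> are nonnegative, an induction on \<open>k\<close> (starting below the support of \<open>h\<close>,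
  where everything vanishes) yields \<open>beta k d \<le> beta k (d - 1)\<close>; so nonnegativity passes
  from \<open>d\<close> to \<open>d - 1\<close>, and each \<open>beta k\<close> can only grow as the depth decreases.
  The Hilbert depth is attained: if \<open>m\<close> is the least point of the support, then
  \<open>beta (m + 1) d = h (m + 1) - (d - m) h m\<close> bounds every admissible \<open>d\<close>.
\<close>

lemma beta_eq_sum_from:
  assumes "\<forall>j<m. h j = 0"
  shows "beta k d h = (\<Sum>j=m..k.
      (-1) ^ nat (k - j) * int (nat (d - j) choose nat (k - j)) * int (h j))"
  unfolding beta_def
proof (rule sum.mono_neutral_left)
  show "{j. j \<le> k \<and> h j \<noteq> 0} \<subseteq> {m..k}"
    using assms by (auto simp: not_less[symmetric])
qed auto

lemma beta_below_support:
  assumes "\<forall>j<m. h j = 0" and "k < m"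
  shows "beta k d h = 0"
  using assms by (simp add: beta_eq_sum_from[OF assms(1)])

lemma signed_binomial_pascal:
  fixes j k d :: int
  assumes "j < k" and "k \<le> d"
  shows "(-1::int) ^ nat (k - j) * int (nat (d - j) choose nat (k - j)) =
     (-1) ^ nat (k - j) * int (nat (d + 1 - j) choose nat (k - j))
     + (-1) ^ nat (k - 1 - j) * int (nat (d - j) choose nat (k - 1 - j))"
proof -
  obtain a b where "nat (d - j) = a" "nat (k - 1 - j) = b" by blast
  moreover have "nat (d + 1 - j) = Suc a" "nat (k - j) = Suc b"
    using assms calculation by auto
  ultimately show ?thesis
    by (simp add: algebra_simps)
qed

lemma beta_pascal:
  assumes vanish: "\<forall>j<m. h j = 0" and "k \<le> d"
  shows "beta k d h = beta k (d + 1) h + beta (k - 1) d h"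
proof (cases "k < m")
  case True
  then show ?thesis using beta_below_support[OF vanish] by simp
next
  case False
  define t where "t d' k' j = (-1::int) ^ nat (k' - j) * int (nat (d' - j) choose nat (k' - j)) * int (h j)"
    for d' k' j
  have range: "{m..k} = insert k {m..k - 1}" using False by auto
  have pascal: "t d k j = t (d + 1) k j + t d (k - 1) j" if "j \<in> {m..k - 1}" for j
    unfolding t_def using that \<open>k \<le> d\<close>
    by (subst signed_binomial_pascal[of j k d]) (auto simp: distrib_right)
  have "beta k d h = int (h k) + (\<Sum>j=m..k-1. t d k j)"
    "beta k (d + 1) h = int (h k) + (\<Sum>j=m..k-1. t (d + 1) k j)"
    "beta (k - 1) d h = (\<Sum>j=m..k-1. t d (k - 1) j)"
    unfolding beta_eq_sum_from[OF vanish] range by (simp_all add: t_def)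
  moreover have "(\<Sum>j=m..k-1. t d k j) =
      (\<Sum>j=m..k-1. t (d + 1) k j) + (\<Sum>j=m..k-1. t d (k - 1) j)"
    unfolding sum.distrib[symmetric] by (rule sum.cong[OF refl pascal])
  ultimately show ?thesis by simp
qed

lemma beta_le_beta_pred_depth:
  assumes vanish: "\<forall>j<m. h j = 0" and nonneg: "\<forall>i\<le>d. 0 \<le> beta i d h" and "k < d"
  shows "beta k d h \<le> beta k (d - 1) h"
proof (cases "k < m")
  case True
  then show ?thesis using beta_below_support[OF vanish] by simp
next
  case False
  then have "m - 1 \<le> k" by simp
  then show ?thesis using \<open>k < d\<close>
  proof (induction k rule: int_ge_induct)
    case base
    then show ?case using beta_below_support[OF vanish] by simp
  next
    case (step i)
    have "beta (i + 1) (d - 1) h = beta (i + 1) d h + beta i (d - 1) h"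
      using beta_pascal[OF vanish, of "i + 1" "d - 1"] step.prems by simp
    moreover have "0 \<le> beta i d h" using nonneg step.prems by simp
    moreover have "beta i d h \<le> beta i (d - 1) h" using step.IH step.prems by simp
    ultimately show ?case by simp
  qed
qed

lemma betas_nonneg_down:
  assumes vanish: "\<forall>j<m. h j = 0" and nonneg: "\<forall>i\<le>d. 0 \<le> beta i d h" and "d' \<le> d"
  shows "\<forall>i\<le>d'. 0 \<le> beta i d' h"
  using \<open>d' \<le> d\<close>
proof (induction d' rule: int_le_induct)
  case base
  then show ?case using nonneg .
next
  case (step e)
  show ?case
  proof (intro allI impI)
    fix i assume "i \<le> e - 1"
    then have "beta i e h \<le> beta i (e - 1) h" and "0 \<le> beta i e h"
      using beta_le_beta_pred_depth[OF vanish step.IH, of i] step.IH by simp_all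
    then show "0 \<le> beta i (e - 1) h" by simp
  qed
qed

lemma beta_antimono_depth:
  assumes vanish: "\<forall>j<m. h j = 0" and nonneg: "\<forall>i\<le>d. 0 \<le> beta i d h"
    and "k \<le> d'" and "d' \<le> d"
  shows "beta k d h \<le> beta k d' h"
  using \<open>d' \<le> d\<close> \<open>k \<le> d'\<close>
proof (induction d' rule: int_le_induct)
  case base
  then show ?case by simp
next
  case (step e)
  have "\<forall>i\<le>e. 0 \<le> beta i e h" using betas_nonneg_down[OF vanish nonneg step.hyps] .
  then have "beta k e h \<le> beta k (e - 1) h"
    using beta_le_beta_pred_depth[OF vanish] step.prems by simp
  then show ?case using step.IH step.prems by simp
qed

lemma in_H_least_support:
  assumes "in_H h"
  obtains m where "h m \<noteq> 0" and "\<forall>j<m. h j = 0"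
proof -
  obtain m0 j0 where m0: "\<forall>j<m0. h j = 0" and "h j0 \<noteq> 0"
    using assms unfolding in_H_def fun_eq_iff by auto
  then obtain m where m: "h m \<noteq> 0" and least: "\<forall>j. h j \<noteq> 0 \<longrightarrow> nat (m - m0) \<le> nat (j - m0)"
    using ex_has_least_nat[of "\<lambda>j. h j \<noteq> 0" j0 "\<lambda>j. nat (j - m0)"] by blast
  have "h j = 0" if "j < m" for j
  proof (cases "j < m0")
    case False
    then have "nat (j - m0) < nat (m - m0)" using that by simp
    then show ?thesis using least by force
  qed (use m0 in simp)
  then show thesis using that m by blast
qed

lemma depth_bound_by_least_support:
  assumes "h m \<noteq> 0" and vanish: "\<forall>j<m. h j = 0" and nonneg: "\<forall>i\<le>d. 0 \<le> beta i d h"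
  shows "d \<le> m + int (h (m + 1))"
proof (cases "m < d")
  case True
  have "{m..m + 1} = {m, m + 1}" by auto
  then have "beta (m + 1) d h = int (h (m + 1)) - (d - m) * int (h m)"
    using True by (simp add: beta_eq_sum_from[OF vanish] algebra_simps)
  moreover have "d - m \<le> (d - m) * int (h m)"
    using True \<open>h m \<noteq> 0\<close> by simp
  moreover have "0 \<le> beta (m + 1) d h" using nonneg True by simp
  ultimately show ?thesis by linarith
qed simp

lemma GreatestI_int_bounded:
  fixes P :: "int \<Rightarrow> bool"
  assumes "P a" and bound: "\<And>x. P x \<Longrightarrow> x \<le> b"
  shows "P (GREATEST x. P x)"
proof -
  define S where "S = {x. P x \<and> a \<le> x}"
  have "finite S" by (rule finite_subset[of _ "{a..b}"]) (auto simp: S_def bound)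
  moreover have "a \<in> S" using \<open>P a\<close> by (simp add: S_def)
  ultimately have "Max S \<in> S" and "a \<le> Max S" by (auto intro: Max_in)
  have "(GREATEST x. P x) = Max S"
  proof (rule Greatest_equality)
    show "P (Max S)" using \<open>Max S \<in> S\<close> by (simp add: S_def)
  next
    fix y assume "P y"
    then show "y \<le> Max S"
      using \<open>finite S\<close> \<open>a \<le> Max S\<close> by (cases "a \<le> y") (auto simp: S_def)
  qed
  then show ?thesis using \<open>Max S \<in> S\<close> by (simp add: S_def)
qed

lemma hdepth_betas_nonneg:
  assumes "in_H h"
  shows "\<forall>k\<le>hdepth h. 0 \<le> beta k (hdepth h) h"
proof -
  obtain m where "h m \<noteq> 0" and vanish: "\<forall>j<m. h j = 0"
    using in_H_least_support[OF assms] by blast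
  have "\<forall>k\<le>m - 1. 0 \<le> beta k (m - 1) h"
    using beta_below_support[OF vanish] by simp
  then show ?thesis
    unfolding hdepth_def
    by (rule GreatestI_int_bounded) (rule depth_bound_by_least_support[OF \<open>h m \<noteq> 0\<close> vanish])
qed

theorem proposition1p3:
  fixes h :: "int \<Rightarrow> nat" and k d' :: int
  assumes "in_H h"
    and "0 \<le> k" and "k \<le> d'" and "d' \<le> hdepth h"
  shows "beta k d' h \<ge> beta k (hdepth h) h \<and> beta k (hdepth h) h \<ge> 0"
proof -
  obtain m where vanish: "\<forall>j<m. h j = 0"
    using assms(1) unfolding in_H_def by auto
  have nonneg: "\<forall>i\<le>hdepth h. 0 \<le> beta i (hdepth h) h"
    using hdepth_betas_nonneg[OF assms(1)] .
  show ?thesis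
    using beta_antimono_depth[OF vanish nonneg assms(3,4)] nonneg assms(3,4) by simp
qed

end
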